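(* For any solution as in the context, $$e^{\mu(t,\theta)-\lambda(t,\theta)}\le e^{\mathring\mu(\theta)-\mathring\lambda(\theta)}\frac{e^{-2\mathring\mu(\theta)}t}{e^{-2\mathring\mu(\theta)}-1+t}\le e^{|\mathring\mu(\theta)|-\mathring\lambda(\theta)},\qquad t\ge1,\ \theta\in[0,1].$$
   Context: Setting: $\mu,\lambda$ are functions of $(t,\theta)$, $t\ge1$, 1-periodic in $\theta$, and $f=f(t,\theta,w,L)\ge0$ ($w\in\mathbb R$, $L\ge0$) solve the Einstein–Vlasov system with hyperbolic symmetry in areal coordinates (metric $-e^{2\mu}dt^2+e^{2\lambda}d\theta^2+t^2(d\psi^2+\sinh^2\psi\,d\phi^2)$): $$\partial_t f+\frac{e^{\mu-\lambda}w}{\sqrt{1+w^2+L/t^2}}\partial_\theta f-\Big(\lambda_t w+e^{\mu-\lambda}\mu_\theta\sqrt{1+w^2+L/t^2}\Big)\partial_w f=0,$$ $$e^{-2\mu}(2t\lambda_t+1)-1=8\pi t^2\rho,\qquad e^{-2\mu}(2t\mu_t-1)+1=8\pi t^2 p,\qquad \mu_\theta=-4\pi t e^{\mu+\lambda}j,$$ $$e^{-2\lambda}\big(\mu_{\theta\theta}+\mu_\theta(\mu_\theta-\lambda_\theta)\big)-e^{-2\mu}\big(\lambda_{tt}+(\lambda_t+1/t)(\lambda_t-\mu_t)\big)=4\pi q,$$ with $\rho=\frac{\pi}{t^2}\int_{-\infty}^\infty\int_0^\infty\sqrt{1+w^2+L/t^2}\,f\,dL\,dw$, $p=\frac{\pi}{t^2}\int\int\frac{w^2}{\sqrt{1+w^2+L/t^2}}f\,dL\,dw$,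 $j=\frac{\pi}{t^2}\int\int wf\,dL\,dw$, $q=\frac{\pi}{t^4}\int\int\frac{L}{\sqrt{1+w^2+L/t^2}}f\,dL\,dw$. Initial data at $t=1$: $\mathring f,\mathring\lambda,\mathring\mu$, $C^1$, 1-periodic, $\mathring f$ compactly supported in $(w,L)$, satisfying the constraint at $t=1$; the $C^1$ solution exists for all $t\ge1$. *)

theory Defs
  imports "HOL-Analysis.Analysis"
begin

text \<open>Einstein--Vlasov system with hyperbolic symmetry in areal coordinates.\<close>

definition Tdom :: "real set" where "Tdom = {1..}"

definition pt :: "(real \<Rightarrow> real \<Rightarrow> real) \<Rightarrow> real \<Rightarrow> real \<Rightarrow> real" where
  "pt u t th = vector_derivative (\<lambda>s. u s th) (at t within Tdom)"
definition pth :: "(real \<Rightarrow> real \<Rightarrow> real) \<Rightarrow> real \<Rightarrow> real \<Rightarrow> real" where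
  "pth u t th = vector_derivative (\<lambda>x. u t x) (at th)"

definition ft :: "(real \<Rightarrow> real \<Rightarrow> real \<Rightarrow> real \<Rightarrow> real) \<Rightarrow> real \<Rightarrow> real \<Rightarrow> real \<Rightarrow> real \<Rightarrow> real" where
  "ft f t th w L = vector_derivative (\<lambda>s. f s th w L) (at t within Tdom)"
definition fth :: "(real \<Rightarrow> real \<Rightarrow> real \<Rightarrow> real \<Rightarrow> real) \<Rightarrow> real \<Rightarrow> real \<Rightarrow> real \<Rightarrow> real \<Rightarrow> real" where
  "fth f t th w L = vector_derivative (\<lambda>x. f t x w L) (at th)"
definition fw :: "(real \<Rightarrow> real \<Rightarrow> real \<Rightarrow> real \<Rightarrow> real) \<Rightarrow> real \<Rightarrow> real \<Rightarrow> real \<Rightarrow> real \<Rightarrow> real" where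
  "fw f t th w L = vector_derivative (\<lambda>x. f t th x L) (at w)"
definition fL :: "(real \<Rightarrow> real \<Rightarrow> real \<Rightarrow> real \<Rightarrow> real) \<Rightarrow> real \<Rightarrow> real \<Rightarrow> real \<Rightarrow> real \<Rightarrow> real" where
  "fL f t th w L = vector_derivative (\<lambda>x. f t th w x) (at L within {0..})"

definition C1_metric :: "(real \<Rightarrow> real \<Rightarrow> real) \<Rightarrow> bool" where
  "C1_metric u \<longleftrightarrow>
     (\<forall>t\<in>Tdom. \<forall>th. (\<lambda>s. u s th) differentiable (at t within Tdom)
                    \<and> (\<lambda>x. u t x) differentiable (at th)) \<and>
     continuous_on (Tdom \<times> UNIV) (\<lambda>(t, th). u t th) \<and>
     continuous_on (Tdom \<times> UNIV) (\<lambda>(t, th). pt u t th) \<and>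
     continuous_on (Tdom \<times> UNIV) (\<lambda>(t, th). pth u t th)"

definition C1_distr :: "(real \<Rightarrow> real \<Rightarrow> real \<Rightarrow> real \<Rightarrow> real) \<Rightarrow> bool" where
  "C1_distr f \<longleftrightarrow>
     (\<forall>t\<in>Tdom. \<forall>th w. \<forall>L\<in>{0..}.
         (\<lambda>s. f s th w L) differentiable (at t within Tdom)
       \<and> (\<lambda>x. f t x w L) differentiable (at th)
       \<and> (\<lambda>x. f t th x L) differentiable (at w)
       \<and> (\<lambda>x. f t th w x) differentiable (at L within {0..})) \<and>
     continuous_on (Tdom \<times> UNIV \<times> UNIV \<times> {0..}) (\<lambda>(t, th, w, L). f t th w L) \<and>
     continuous_on (Tdom \<times> UNIV \<times> UNIV \<times> {0..}) (\<lambda>(t, th, w, L). ft f t th w L) \<and>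
     continuous_on (Tdom \<times> UNIV \<times> UNIV \<times> {0..}) (\<lambda>(t, th, w, L). fth f t th w L) \<and>
     continuous_on (Tdom \<times> UNIV \<times> UNIV \<times> {0..}) (\<lambda>(t, th, w, L). fw f t th w L) \<and>
     continuous_on (Tdom \<times> UNIV \<times> UNIV \<times> {0..}) (\<lambda>(t, th, w, L). fL f t th w L)"

definition mom_int :: "(real \<Rightarrow> real \<Rightarrow> real) \<Rightarrow> real" where
  "mom_int g = (LINT w|lborel. set_lebesgue_integral lborel {0..} (\<lambda>L. g w L))"

definition rho :: "(real \<Rightarrow> real \<Rightarrow> real \<Rightarrow> real \<Rightarrow> real) \<Rightarrow> real \<Rightarrow> real \<Rightarrow> real" where
  "rho f t th = pi / t^2 * mom_int (\<lambda>w L. sqrt (1 + w^2 + L / t^2) * f t th w L)"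
definition pp :: "(real \<Rightarrow> real \<Rightarrow> real \<Rightarrow> real \<Rightarrow> real) \<Rightarrow> real \<Rightarrow> real \<Rightarrow> real" where
  "pp f t th = pi / t^2 * mom_int (\<lambda>w L. w^2 / sqrt (1 + w^2 + L / t^2) * f t th w L)"
definition jj :: "(real \<Rightarrow> real \<Rightarrow> real \<Rightarrow> real \<Rightarrow> real) \<Rightarrow> real \<Rightarrow> real \<Rightarrow> real" where
  "jj f t th = pi / t^2 * mom_int (\<lambda>w L. w * f t th w L)"
definition qq :: "(real \<Rightarrow> real \<Rightarrow> real \<Rightarrow> real \<Rightarrow> real) \<Rightarrow> real \<Rightarrow> real \<Rightarrow> real" where
  "qq f t th = pi / t^4 * mom_int (\<lambda>w L. L / sqrt (1 + w^2 + L / t^2) * f t th w L)"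

definition EV_solution ::
  "(real \<Rightarrow> real \<Rightarrow> real) \<Rightarrow> (real \<Rightarrow> real \<Rightarrow> real) \<Rightarrow> (real \<Rightarrow> real \<Rightarrow> real \<Rightarrow> real \<Rightarrow> real) \<Rightarrow> bool"
where
  "EV_solution mu lam f \<longleftrightarrow>
     C1_metric mu \<and> C1_metric lam \<and> C1_distr f \<and>
     \<comment> \<open>1-periodicity in theta\<close>
     (\<forall>t\<in>Tdom. \<forall>th. mu t (th + 1) = mu t th \<and> lam t (th + 1) = lam t th) \<and>
     (\<forall>t\<in>Tdom. \<forall>th w L. f t (th + 1) w L = f t th w L) \<and>
     \<comment> \<open>nonnegativity of f\<close>
     (\<forall>t\<in>Tdom. \<forall>th w. \<forall>L\<in>{0..}. 0 \<le> f t th w L) \<and>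
     \<comment> \<open>compact support in (w, L) at every time\<close>
     (\<forall>t\<in>Tdom. \<exists>R. \<forall>th w L. L \<ge> 0 \<longrightarrow> (\<bar>w\<bar> > R \<or> L > R) \<longrightarrow> f t th w L = 0) \<and>
     \<comment> \<open>Vlasov equation\<close>
     (\<forall>t\<in>Tdom. \<forall>th w. \<forall>L\<in>{0..}.
        ft f t th w L
        + exp (mu t th - lam t th) * w / sqrt (1 + w^2 + L / t^2) * fth f t th w L
        - (pt lam t th * w + exp (mu t th - lam t th) * pth mu t th * sqrt (1 + w^2 + L / t^2))
            * fw f t th w L = 0) \<and>
     \<comment> \<open>field equations\<close>
     (\<forall>t\<in>Tdom. \<forall>th.
        exp (-2 * mu t th) * (2 * t * pt lam t th + 1) - 1 = 8 * pi * t^2 * rho f t th) \<and>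
     (\<forall>t\<in>Tdom. \<forall>th.
        exp (-2 * mu t th) * (2 * t * pt mu t th - 1) + 1 = 8 * pi * t^2 * pp f t th) \<and>
     (\<forall>t\<in>Tdom. \<forall>th.
        pth mu t th = - 4 * pi * t * exp (mu t th + lam t th) * jj f t th) \<and>
     \<comment> \<open>second order equation (the second derivatives occurring in it exist)\<close>
     (\<forall>t\<in>Tdom. \<forall>th.
        (\<lambda>s. pt lam s th) differentiable (at t within Tdom) \<and>
        (\<lambda>x. pth mu t x) differentiable (at th)) \<and>
     (\<forall>t\<in>Tdom. \<forall>th.
        exp (-2 * lam t th) * (pth (pth mu) t th + pth mu t th * (pth mu t th - pth lam t th))
        - exp (-2 * mu t th) * (pt (pt lam) t th + (pt lam t th + 1 / t) * (pt lam t th - pt mu t th))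
        = 4 * pi * qq f t th)"

end

theory Submission
  imports Defs
begin

(* Along a line theta = const the first two field equations, together with 0 <= p <= rho, are
   differential inequalities.  The p-equation reads d/dt (t e^(-2 mu) - t) = -8 pi t^2 p <= 0,
   so t e^(-2 mu) - t <= y - 1 where y = e^(-2 mu(1)).  Subtracting it from the rho-equation gives
   mu_t - lam_t <= 1/t - e^(2 mu)/t <= 1/t - 1/(y - 1 + t), i.e. mu - lam - ln t + ln (y - 1 + t)
   is nonincreasing, which exponentiates to the first inequality.  The second one is
   y t / (y - 1 + t) <= max 1 y for t >= 1. *)

lemma DERIV_within_nonpos_imp_decreasing:
  fixes F F' :: "real \<Rightarrow> real"
  assumes "a \<le> b" and "{a..b} \<subseteq> S"
    and deriv: "\<And>x. x \<in> {a..b} \<Longrightarrow> (F has_real_derivative F' x) (at x within S)"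
    and nonpos: "\<And>x. x \<in> {a..b} \<Longrightarrow> F' x \<le> 0"
  shows "F b \<le> F a"
proof -
  obtain x where x: "x \<in> {a..b}" and "F b - F a = F' x * (b - a)"
    using mvt_very_simple[OF \<open>a \<le> b\<close>, of F "\<lambda>x h. F' x * h"]
      DERIV_subset[OF deriv \<open>{a..b} \<subseteq> S\<close>]
    by (auto simp: has_field_derivative_def)
  moreover have "F' x * (b - a) \<le> 0"
    using nonpos[OF x] \<open>a \<le> b\<close> by (simp add: mult_nonpos_nonneg)
  ultimately show ?thesis by simp
qed

lemma mom_int_integrable:
  fixes h :: "real \<Rightarrow> real \<Rightarrow> real"
  assumes cont: "continuous_on (UNIV \<times> {0..}) (\<lambda>(w, L). h w L)"
    and supp: "\<And>w L. 0 \<le> L \<Longrightarrow> \<bar>w\<bar> > R \<or> L > R \<Longrightarrow> h w L = 0"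
  shows "set_integrable lborel {0..} (h w)"
    and "integrable lborel (\<lambda>w. LINT L:{0..}|lborel. h w L)"
proof -
  define K where "K = {-\<bar>R\<bar>..\<bar>R\<bar>} \<times> {0..\<bar>R\<bar>}"
  have outside: "h w L = 0" if "0 \<le> L" "(w, L) \<notin> K" for w L
    using that by (intro supp) (auto simp: K_def)
  have cut: "indicator {0..} L *\<^sub>R h w L = indicator K (w, L) *\<^sub>R h w L" for w L :: real
    using outside[where w = w and L = L] by (auto simp: K_def indicator_def)
  have "continuous_on {0..\<bar>R\<bar>} (\<lambda>L. (\<lambda>(w, L). h w L) (w, L))"
    by (intro continuous_on_compose2[OF cont] continuous_intros) auto
  then have "integrable lborel (\<lambda>L. indicator {0..\<bar>R\<bar>} L *\<^sub>R h w L)"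
    by (intro borel_integrable_compact) auto
  moreover have "(\<lambda>L. indicator {0..\<bar>R\<bar>} L *\<^sub>R h w L) = (\<lambda>L. indicator {0..} L *\<^sub>R h w L)"
    using outside[where w = w] by (intro ext) (auto simp: K_def indicator_def)
  ultimately show "set_integrable lborel {0..} (h w)"
    unfolding set_integrable_def by simp
  have "integrable lborel (\<lambda>z. indicator K z *\<^sub>R (\<lambda>(w, L). h w L) z)"
    using cont by (intro borel_integrable_compact)
      (auto simp: K_def intro: compact_Times continuous_on_subset)
  then have "integrable (lborel \<Otimes>\<^sub>M lborel) (\<lambda>z. indicator K z *\<^sub>R h (fst z) (snd z))"
    by (simp add: lborel_prod case_prod_beta)
  from lborel_pair.integrable_fst'[OF this]
  show "integrable lborel (\<lambda>w. LINT L:{0..}|lborel. h w L)"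
    unfolding set_lebesgue_integral_def cut by simp
qed

lemma mom_int_mono:
  fixes g h :: "real \<Rightarrow> real \<Rightarrow> real"
  assumes "continuous_on (UNIV \<times> {0..}) (\<lambda>(w, L). h w L)"
    and "\<And>w L. 0 \<le> L \<Longrightarrow> \<bar>w\<bar> > R \<or> L > R \<Longrightarrow> h w L = 0"
    and le: "\<And>w L. 0 \<le> L \<Longrightarrow> g w L \<le> h w L"
    and nonneg: "\<And>w L. 0 \<le> L \<Longrightarrow> 0 \<le> h w L"
  shows "mom_int g \<le> mom_int h"
  unfolding mom_int_def
proof (rule integral_mono'[OF mom_int_integrable(2)[OF assms(1,2)]])
  fix w
  show "0 \<le> (LINT L:{0..}|lborel. h w L)"
    using nonneg unfolding set_lebesgue_integral_def
    by (intro integral_nonneg_AE AE_I2) (auto simp: indicator_def)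
  show "(LINT L:{0..}|lborel. g w L) \<le> (LINT L:{0..}|lborel. h w L)"
    using mom_int_integrable(1)[OF assms(1,2)] le nonneg
    unfolding set_integrable_def set_lebesgue_integral_def
    by (intro integral_mono') (auto simp: indicator_def)
qed

lemma mom_int_nonneg:
  assumes "\<And>w L. 0 \<le> L \<Longrightarrow> 0 \<le> g w L"
  shows "0 \<le> mom_int g"
  unfolding mom_int_def using assms
  by (intro integral_nonneg_AE AE_I2)
    (auto simp: set_lebesgue_integral_def indicator_def intro: integral_nonneg_AE)

lemma EV_solution_momentum_slice:
  assumes "EV_solution mu lam f" and "1 \<le> s"
  shows "continuous_on (UNIV \<times> {0..}) (\<lambda>(w, L). f s th w L)"
    and "\<exists>R. \<forall>w L. 0 \<le> L \<longrightarrow> \<bar>w\<bar> > R \<or> L > R \<longrightarrow> f s th w L = 0"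
    and "\<And>w L. 0 \<le> L \<Longrightarrow> 0 \<le> f s th w L"
proof -
  have s: "s \<in> Tdom" using \<open>1 \<le> s\<close> by (simp add: Tdom_def)
  have "continuous_on (Tdom \<times> UNIV \<times> UNIV \<times> {0..}) (\<lambda>(t, th, w, L). f t th w L)"
    using assms(1) by (simp add: EV_solution_def C1_distr_def)
  then have "continuous_on (UNIV \<times> {0..}) (\<lambda>z. (\<lambda>(t, th, w, L). f t th w L) (s, th, fst z, snd z))"
    by (rule continuous_on_compose2, intro continuous_intros) (use s in auto)
  then show "continuous_on (UNIV \<times> {0..}) (\<lambda>(w, L). f s th w L)"
    by (simp add: case_prod_beta)
  have "\<forall>t\<in>Tdom. (\<exists>R. \<forall>th w L. 0 \<le> L \<longrightarrow> \<bar>w\<bar> > R \<or> L > R \<longrightarrow> f t th w L = 0)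
      \<and> (\<forall>th w. \<forall>L\<in>{0..}. 0 \<le> f t th w L)"
    using assms(1) unfolding EV_solution_def by simp
  then have "(\<exists>R. \<forall>th w L. 0 \<le> L \<longrightarrow> \<bar>w\<bar> > R \<or> L > R \<longrightarrow> f s th w L = 0)
      \<and> (\<forall>th w. \<forall>L\<in>{0..}. 0 \<le> f s th w L)"
    using s by (rule bspec)
  then show "\<exists>R. \<forall>w L. 0 \<le> L \<longrightarrow> \<bar>w\<bar> > R \<or> L > R \<longrightarrow> f s th w L = 0"
    and "\<And>w L. 0 \<le> L \<Longrightarrow> 0 \<le> f s th w L"
    by blast+
qed

lemma pp_nonneg:
  assumes "EV_solution mu lam f" and "1 \<le> s"
  shows "0 \<le> pp f s th"
  unfolding pp_def using EV_solution_momentum_slice(3)[OF assms]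
  by (intro mult_nonneg_nonneg mom_int_nonneg) auto

lemma pp_le_rho:
  assumes "EV_solution mu lam f" and "1 \<le> s"
  shows "pp f s th \<le> rho f s th"
proof -
  note slice = EV_solution_momentum_slice[OF assms, where th = th]
  obtain R where R: "\<And>w L. 0 \<le> L \<Longrightarrow> \<bar>w\<bar> > R \<or> L > R \<Longrightarrow> f s th w L = 0"
    using slice(2) by blast
  have q_pos: "0 < 1 + w^2 + L / s^2" if "0 \<le> L" for w L :: real
    using that by (simp add: add_pos_nonneg)
  have "w^2 / sqrt (1 + w^2 + L / s^2) * f s th w L \<le> sqrt (1 + w^2 + L / s^2) * f s th w L"
    if "0 \<le> L" for w L :: real
    using q_pos[OF that] that slice(3)
    by (intro mult_right_mono) (auto simp: divide_le_eq)
  moreover have "continuous_on (UNIV \<times> {0..}) (\<lambda>(w, L). sqrt (1 + w^2 + L / s^2) * f s th w L)"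
    using slice(1) assms(2) unfolding case_prod_beta by (intro continuous_intros) auto
  ultimately have "mom_int (\<lambda>w L. w^2 / sqrt (1 + w^2 + L / s^2) * f s th w L)
      \<le> mom_int (\<lambda>w L. sqrt (1 + w^2 + L / s^2) * f s th w L)"
    using slice(3) R by (intro mom_int_mono[where R = R]) auto
  then show ?thesis
    unfolding pp_def rho_def by (intro mult_left_mono) auto
qed

lemma has_real_derivative_pt:
  assumes "C1_metric u" and "t \<in> Tdom"
  shows "((\<lambda>s. u s th) has_real_derivative pt u t th) (at t within Tdom)"
proof -
  have "(\<lambda>s. u s th) differentiable (at t within Tdom)"
    using assms by (simp add: C1_metric_def)
  then show ?thesis
    unfolding pt_def has_real_derivative_iff_has_vector_derivative
    by (simp add: vector_derivative_works[symmetric])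
qed

lemma exp_neg2_mu_bound:
  fixes m m' :: "real \<Rightarrow> real"
  assumes m: "\<And>s. 1 \<le> s \<Longrightarrow> (m has_real_derivative m' s) (at s within {1..})"
    and p_nonneg: "\<And>s. 1 \<le> s \<Longrightarrow> 0 \<le> exp (-2 * m s) * (2 * s * m' s - 1) + 1"
    and "1 \<le> t"
  shows "t * exp (-2 * m t) - t \<le> exp (-2 * m 1) - 1"
proof -
  have "t * exp (-2 * m t) - t \<le> 1 * exp (-2 * m 1) - 1"
  proof (rule DERIV_within_nonpos_imp_decreasing
      [where S = "{1..}" and F = "\<lambda>s. s * exp (-2 * m s) - s"])
    fix s assume "s \<in> {1..t}"
    then have "(m has_real_derivative m' s) (at s within {1..})" by (simp add: m)
    then show "((\<lambda>s. s * exp (-2 * m s) - s) has_real_derivative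
        exp (-2 * m s) + s * (exp (-2 * m s) * (-2 * m' s)) - 1) (at s within {1..})"
      by (intro derivative_eq_intros) auto
    show "exp (-2 * m s) + s * (exp (-2 * m s) * (-2 * m' s)) - 1 \<le> 0"
      using p_nonneg[of s] \<open>s \<in> {1..t}\<close> by (simp add: algebra_simps)
  qed (use \<open>1 \<le> t\<close> in auto)
  then show ?thesis by simp
qed

lemma exp_mu_minus_lam_bound:
  fixes m l m' l' :: "real \<Rightarrow> real"
  assumes m: "\<And>s. 1 \<le> s \<Longrightarrow> (m has_real_derivative m' s) (at s within {1..})"
    and l: "\<And>s. 1 \<le> s \<Longrightarrow> (l has_real_derivative l' s) (at s within {1..})"
    and p_nonneg: "\<And>s. 1 \<le> s \<Longrightarrow> 0 \<le> exp (-2 * m s) * (2 * s * m' s - 1) + 1"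
    and p_le_rho: "\<And>s. 1 \<le> s \<Longrightarrow>
      exp (-2 * m s) * (2 * s * m' s - 1) + 1 \<le> exp (-2 * m s) * (2 * s * l' s + 1) - 1"
    and "1 \<le> t"
  shows "exp (m t - l t) \<le> exp (m 1 - l 1) * (exp (-2 * m 1) * t / (exp (-2 * m 1) - 1 + t))"
proof -
  define y1 where "y1 = exp (-2 * m 1)"
  have y1_pos: "0 < y1 - 1 + s" if "1 \<le> s" for s
    using that exp_gt_zero[of "-2 * m 1"] unfolding y1_def by linarith
  have "m t - l t - ln t + ln (y1 - 1 + t) \<le> m 1 - l 1 - ln 1 + ln (y1 - 1 + 1)"
  proof (rule DERIV_within_nonpos_imp_decreasing
      [where S = "{1..}" and F = "\<lambda>s. m s - l s - ln s + ln (y1 - 1 + s)"])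
    fix s assume "s \<in> {1..t}"
    then have "1 \<le> s" by simp
    show "((\<lambda>s. m s - l s - ln s + ln (y1 - 1 + s)) has_real_derivative
        m' s - l' s - 1 / s + 1 / (y1 - 1 + s)) (at s within {1..})"
      using m[OF \<open>1 \<le> s\<close>] l[OF \<open>1 \<le> s\<close>] \<open>1 \<le> s\<close> y1_pos[OF \<open>1 \<le> s\<close>]
      by (intro derivative_eq_intros) auto
    define y where "y = exp (-2 * m s)"
    have "y > 0" by (simp add: y_def)
    have "2 * (s * y) * (m' s - l' s) \<le> 2 * y - 2"
      using p_le_rho[OF \<open>1 \<le> s\<close>] by (simp add: y_def algebra_simps)
    then have "m' s - l' s \<le> 1 / s - 1 / (s * y)"
      using \<open>y > 0\<close> \<open>1 \<le> s\<close> by (simp add: field_simps)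
    moreover have "1 / (y1 - 1 + s) \<le> 1 / (s * y)"
      using exp_neg2_mu_bound[OF m p_nonneg \<open>1 \<le> s\<close>] \<open>y > 0\<close> \<open>1 \<le> s\<close>
        y1_pos[OF \<open>1 \<le> s\<close>]
      by (intro divide_left_mono) (auto simp: y_def y1_def)
    ultimately show "m' s - l' s - 1 / s + 1 / (y1 - 1 + s) \<le> 0" by linarith
  qed (use \<open>1 \<le> t\<close> in auto)
  then have "m t - l t \<le> m 1 - l 1 + ln (y1 * t / (y1 - 1 + t))"
    using y1_pos[OF \<open>1 \<le> t\<close>] \<open>1 \<le> t\<close> by (simp add: y1_def ln_div ln_mult)
  then have "exp (m t - l t) \<le> exp (m 1 - l 1 + ln (y1 * t / (y1 - 1 + t)))"
    by simp
  also have "\<dots> = exp (m 1 - l 1) * (y1 * t / (y1 - 1 + t))"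
    using y1_pos[OF \<open>1 \<le> t\<close>] \<open>1 \<le> t\<close> by (simp add: exp_add y1_def)
  finally show ?thesis by (simp add: y1_def)
qed

lemma exp_ratio_le_exp_abs:
  fixes a b t :: real
  assumes "1 \<le> t"
  shows "exp (a - b) * (exp (-2 * a) * t / (exp (-2 * a) - 1 + t)) \<le> exp (\<bar>a\<bar> - b)"
proof -
  define y where "y = exp (-2 * a)"
  have "y > 0" by (simp add: y_def)
  have "y * t / (y - 1 + t) \<le> max 1 y"
  proof (cases "y \<le> 1")
    case True
    then have "y * t \<le> y - 1 + t"
      using \<open>1 \<le> t\<close> mult_left_mono[of 1 t "1 - y"] by (simp add: algebra_simps)
    then have "y * t / (y - 1 + t) \<le> 1"
      using \<open>y > 0\<close> \<open>1 \<le> t\<close> by (simp add: pos_divide_le_eq)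
    then show ?thesis by simp
  next
    case False
    then show ?thesis using \<open>1 \<le> t\<close> by (simp add: divide_le_eq)
  qed
  then have "exp (a - b) * (y * t / (y - 1 + t)) \<le> exp (a - b) * max 1 y"
    by (intro mult_left_mono) auto
  also have "\<dots> = exp (\<bar>a\<bar> - b)"
    by (simp add: y_def abs_real_def max_def exp_add[symmetric])
  finally show ?thesis by (simp add: y_def)
qed

theorem mainTheorem4:
  fixes mu lam :: "real \<Rightarrow> real \<Rightarrow> real"
    and f :: "real \<Rightarrow> real \<Rightarrow> real \<Rightarrow> real \<Rightarrow> real"
  assumes "EV_solution mu lam f"
    and "t \<ge> 1" and "th \<in> {0..1}"
  shows "exp (mu t th - lam t th)
           \<le> exp (mu 1 th - lam 1 th)
              * (exp (-2 * mu 1 th) * t / (exp (-2 * mu 1 th) - 1 + t))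
       \<and> exp (mu 1 th - lam 1 th)
              * (exp (-2 * mu 1 th) * t / (exp (-2 * mu 1 th) - 1 + t))
           \<le> exp (\<bar>mu 1 th\<bar> - lam 1 th)"
proof -
  note EV = assms(1)
  have deriv: "((\<lambda>s. u s th) has_real_derivative pt u s th) (at s within {1..})"
    if "C1_metric u" "1 \<le> s" for u s
    using has_real_derivative_pt[OF that(1)] that(2) by (simp add: Tdom_def)
  have C1: "C1_metric mu" "C1_metric lam"
    using EV by (simp_all add: EV_solution_def)
  have rho_eq: "exp (-2 * mu s th) * (2 * s * pt lam s th + 1) - 1 = 8 * pi * s^2 * rho f s th"
    and pp_eq: "exp (-2 * mu s th) * (2 * s * pt mu s th - 1) + 1 = 8 * pi * s^2 * pp f s th"
    if "1 \<le> s" for s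
    using EV that by (simp_all add: EV_solution_def Tdom_def)
  have "exp (mu t th - lam t th)
      \<le> exp (mu 1 th - lam 1 th) * (exp (-2 * mu 1 th) * t / (exp (-2 * mu 1 th) - 1 + t))"
  proof (rule exp_mu_minus_lam_bound[OF deriv[OF C1(1)] deriv[OF C1(2)] _ _ \<open>t \<ge> 1\<close>])
    fix s :: real assume "1 \<le> s"
    show "0 \<le> exp (-2 * mu s th) * (2 * s * pt mu s th - 1) + 1"
      using pp_eq[OF \<open>1 \<le> s\<close>] pp_nonneg[OF EV \<open>1 \<le> s\<close>] by simp
    show "exp (-2 * mu s th) * (2 * s * pt mu s th - 1) + 1
        \<le> exp (-2 * mu s th) * (2 * s * pt lam s th + 1) - 1"
      using pp_eq[OF \<open>1 \<le> s\<close>] rho_eq[OF \<open>1 \<le> s\<close>] pp_le_rho[OF EV \<open>1 \<le> s\<close>, of th]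
      by (simp add: mult_left_mono)
  qed
  with exp_ratio_le_exp_abs[OF \<open>t \<ge> 1\<close>] show ?thesis by blast
qed

end
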